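(* Let $(X,d)$ be a pointed metric space and let $((x_i,y_i))_{i\in I}$ be a Lipschitz interpolating family in $\widetilde X$ for $\mathrm{Lip}_0(X)$ with Lipschitz interpolation constant $M$. Assume that $(f_i)_{i\in I}$ is a Beurling set of functions in $\mathrm{Lip}_0(X)$ for $((x_i,y_i))_{i\in I}$. Then for every $\alpha=(\alpha_i)_{i\in I}\in\ell_\infty(I)$ the series $\sum_{i\in I}\alpha_i f_i(x)$ converges for every $x\in X$, and the map $R:\ell_\infty(I)\to\mathrm{Lip}_0(X)$, $R(\alpha)=\sum_{i\in I}\alpha_i f_i$, is a well-defined bounded linear operator with $\|R\|=M$ and $T\circ R=\mathrm{Id}_{\ell_\infty(I)}$, where $T$ is the Lipschitz interpolating operator of the family.
   Context: All spaces are real. $(X,d)$ is a metric space with base point $0$, $\widetilde{X}=\{(x,y)\in X\times X: x\neq y\}$. $\mathrm{Lip}_0(X)$ is the Banach space of Lipschitz $f:X\to\mathbb{R}$ with $f(0)=0$, normed by $\|f\|=\sup_{(x,y)\in\widetilde X}|f(x)-f(y)|/d(x,y)$. For a family $((x_i,y_i))_{i\in I}$ in $\widetilde X$, its Lipschitz interpolating operator is $T:\mathrm{Lip}_0(X)\to\ell_\infty(I)$, $T(f)=\big((f(x_i)-f(y_i))/d(x_i,y_i)\big)_{i\in I}$; the family is Lipschitz interpolating for $\mathrm{Lip}_0(X)$ if $T$ is surjective, and then its Lipschitz interpolation constant is $M=\inf\{K\geq 1: \forall \alpha\in\ell_\infty(I), \|\alpha\|_\infty\le1,\ \exists f\in\mathrm{Lip}_0(X),\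 \|f\|\le K,\ T(f)=\alpha\}$. A Beurling set of functions in $\mathrm{Lip}_0(X)$ for such a family (with constant $M$) is a family $(f_i)_{i\in I}$ of functions $f_i:X\to\mathbb R$ with $f_i(0)=0$ for all $i$, $(f_i(x_j)-f_i(y_j))/d(x_j,y_j)=\delta_{ij}$ (Kronecker delta) for all $i,j\in I$, and $\sup_{(x,y)\in\widetilde X}\sum_{i\in I}|f_i(x)-f_i(y)|/d(x,y)\leq M$. *)

theory Defs
  imports "HOL-Analysis.Analysis"
begin

text \<open>Pointed metric space: the type 'a with its metric dist and a base point p.\<close>

definition lip0 :: "'a::metric_space \<Rightarrow> ('a \<Rightarrow> real) \<Rightarrow> bool" where
  "lip0 p f \<longleftrightarrow> f p = 0 \<and> (\<exists>K. \<forall>x y. \<bar>f x - f y\<bar> \<le> K * dist x y)"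

definition lip_norm :: "('a::metric_space \<Rightarrow> real) \<Rightarrow> real" where
  "lip_norm f = Sup (insert 0 {\<bar>f x - f y\<bar> / dist x y | x y. x \<noteq> y})"

definition linf :: "'i set \<Rightarrow> ('i \<Rightarrow> real) set" where
  "linf I = {a. (\<forall>i. i \<notin> I \<longrightarrow> a i = 0) \<and> bounded (a ` I)}"

definition sup_norm :: "'i set \<Rightarrow> ('i \<Rightarrow> real) \<Rightarrow> real" where
  "sup_norm I a = Sup (insert 0 ((\<lambda>i. \<bar>a i\<bar>) ` I))"

definition interp_op :: "'i set \<Rightarrow> ('i \<Rightarrow> 'a::metric_space) \<Rightarrow> ('i \<Rightarrow> 'a) \<Rightarrow> ('a \<Rightarrow> real) \<Rightarrow> ('i \<Rightarrow> real)" where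
  "interp_op I x y f = (\<lambda>i. if i \<in> I then (f (x i) - f (y i)) / dist (x i) (y i) else 0)"

definition lip_interpolating :: "'a::metric_space \<Rightarrow> 'i set \<Rightarrow> ('i \<Rightarrow> 'a) \<Rightarrow> ('i \<Rightarrow> 'a) \<Rightarrow> bool" where
  "lip_interpolating p I x y \<longleftrightarrow> (\<forall>i\<in>I. x i \<noteq> y i) \<and>
     (\<forall>\<alpha>\<in>linf I. \<exists>f. lip0 p f \<and> interp_op I x y f = \<alpha>)"

definition lip_interp_const :: "'a::metric_space \<Rightarrow> 'i set \<Rightarrow> ('i \<Rightarrow> 'a) \<Rightarrow> ('i \<Rightarrow> 'a) \<Rightarrow> real" where
  "lip_interp_const p I x y = Inf {K. K \<ge> 1 \<and> (\<forall>\<alpha>\<in>linf I. sup_norm I \<alpha> \<le> 1 \<longrightarrow>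
       (\<exists>f. lip0 p f \<and> lip_norm f \<le> K \<and> interp_op I x y f = \<alpha>))}"

definition beurling_set :: "'a::metric_space \<Rightarrow> 'i set \<Rightarrow> ('i \<Rightarrow> 'a) \<Rightarrow> ('i \<Rightarrow> 'a) \<Rightarrow> real
      \<Rightarrow> ('i \<Rightarrow> 'a \<Rightarrow> real) \<Rightarrow> bool" where
  "beurling_set p I x y M f \<longleftrightarrow>
     (\<forall>i\<in>I. f i p = 0) \<and>
     (\<forall>i\<in>I. \<forall>j\<in>I. (f i (x j) - f i (y j)) / dist (x j) (y j) = (if i = j then 1 else 0)) \<and>
     (\<forall>u v. u \<noteq> v \<longrightarrow>
        (\<lambda>i. \<bar>f i u - f i v\<bar> / dist u v) summable_on I \<and>
        (\<Sum>\<^sub>\<infinity>i\<in>I. \<bar>f i u - f i v\<bar> / dist u v) \<le> M)"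

end

theory Submission
  imports Defs
begin

text \<open>Because \<open>f\<^sub>i p = 0\<close>, the Beurling bound for the pair \<open>(z, p)\<close> makes
  \<open>\<Sum>\<^sub>i \<alpha>\<^sub>i f\<^sub>i z\<close> absolutely summable for bounded \<open>\<alpha>\<close>. The difference quotients of \<open>R \<alpha>\<close> are the
  \<open>\<alpha>\<close>-weighted sums of those of the \<open>f\<^sub>i\<close>, whence \<open>\<parallel>R \<alpha>\<parallel> \<le> M \<parallel>\<alpha>\<parallel>\<^sub>\<infinity>\<close>, and the Kronecker
  condition yields \<open>T (R \<alpha>) = \<alpha>\<close>. Conversely \<open>R\<close> itself solves every interpolation problem of
  the unit ball of \<open>\<ell>\<^sub>\<infinity>(I)\<close> with functions of norm at most \<open>\<parallel>R\<parallel>\<close>, and \<open>\<parallel>R\<parallel> \<ge> 1\<close> since \<open>R\<close>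
  interpolates a unit vector, so \<open>M \<le> \<parallel>R\<parallel>\<close> by the definition of \<open>M\<close>. Hence of the interpolation
  hypothesis only \<open>x\<^sub>i \<noteq> y\<^sub>i\<close> is needed.\<close>

lemma infsum_diff:
  fixes g h :: "'i \<Rightarrow> 'b::{topological_ab_group_add, t2_space}"
  assumes "g summable_on A" "h summable_on A"
  shows "(\<Sum>\<^sub>\<infinity>i\<in>A. g i - h i) = infsum g A - infsum h A"
  using infsum_add[OF assms(1) summable_on_uminus[THEN iffD2, OF assms(2)]]
  by (simp add: infsum_uminus)

lemma abs_summable_on_bounded_mult:
  fixes a g :: "'i \<Rightarrow> real"
  assumes "(\<lambda>i. \<bar>g i\<bar>) summable_on I" and "\<And>i. i \<in> I \<Longrightarrow> \<bar>a i\<bar> \<le> B"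
  shows "(\<lambda>i. \<bar>a i * g i\<bar>) summable_on I"
  using summable_on_cmult_right[OF assms(1), of B]
  by (rule summable_on_comparison_test) (auto simp: abs_mult intro: mult_right_mono assms(2))

lemma summable_on_bounded_mult:
  fixes a g :: "'i \<Rightarrow> real"
  assumes "(\<lambda>i. \<bar>g i\<bar>) summable_on I" and "\<And>i. i \<in> I \<Longrightarrow> \<bar>a i\<bar> \<le> B"
  shows "(\<lambda>i. a i * g i) summable_on I"
  using abs_summable_on_bounded_mult[OF assms] summable_on_iff_abs_summable_on_real by force

lemma abs_infsum_bounded_mult_le:
  fixes a g :: "'i \<Rightarrow> real"
  assumes g: "(\<lambda>i. \<bar>g i\<bar>) summable_on I" and a: "\<And>i. i \<in> I \<Longrightarrow> \<bar>a i\<bar> \<le> B"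
  shows "\<bar>\<Sum>\<^sub>\<infinity>i\<in>I. a i * g i\<bar> \<le> B * (\<Sum>\<^sub>\<infinity>i\<in>I. \<bar>g i\<bar>)"
proof -
  have ag: "(\<lambda>i. \<bar>a i * g i\<bar>) summable_on I"
    using g a by (rule abs_summable_on_bounded_mult)
  have "\<bar>\<Sum>\<^sub>\<infinity>i\<in>I. a i * g i\<bar> \<le> (\<Sum>\<^sub>\<infinity>i\<in>I. \<bar>a i * g i\<bar>)"
    using norm_infsum_bound[of "\<lambda>i. a i * g i" I] ag by simp
  also have "\<dots> \<le> (\<Sum>\<^sub>\<infinity>i\<in>I. B * \<bar>g i\<bar>)"
    using ag summable_on_cmult_right[OF g]
    by (rule infsum_mono) (auto simp: abs_mult intro: mult_right_mono a)
  also have "\<dots> = B * (\<Sum>\<^sub>\<infinity>i\<in>I. \<bar>g i\<bar>)"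
    by (rule infsum_cmult_right')
  finally show ?thesis .
qed

lemma bdd_above_sup_norm_set:
  assumes "\<alpha> \<in> linf I"
  shows "bdd_above (insert 0 ((\<lambda>i. \<bar>\<alpha> i\<bar>) ` I))"
proof -
  obtain B where "\<forall>t\<in>\<alpha> ` I. \<bar>t\<bar> \<le> B"
    using assms by (auto simp: linf_def bounded_iff)
  then show ?thesis
    by (intro bdd_aboveI[of _ "max 0 B"]) auto
qed

lemma abs_le_sup_norm:
  assumes "\<alpha> \<in> linf I" and "i \<in> I"
  shows "\<bar>\<alpha> i\<bar> \<le> sup_norm I \<alpha>"
  unfolding sup_norm_def
  using bdd_above_sup_norm_set[OF assms(1)] by (rule cSup_upper[rotated]) (use assms(2) in auto)

lemma sup_norm_nonneg:
  assumes "\<alpha> \<in> linf I"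
  shows "0 \<le> sup_norm I \<alpha>"
  unfolding sup_norm_def
  using bdd_above_sup_norm_set[OF assms] by (rule cSup_upper[rotated]) simp

lemma sup_norm_le:
  assumes "0 \<le> B" and "\<And>i. i \<in> I \<Longrightarrow> \<bar>\<alpha> i\<bar> \<le> B"
  shows "sup_norm I \<alpha> \<le> B"
  unfolding sup_norm_def by (rule cSup_least) (use assms in auto)

lemma indicator_singleton_in_linf:
  assumes "i \<in> I"
  shows "(indicator {i} :: 'i \<Rightarrow> real) \<in> linf I"
proof -
  have "(indicator {i} :: 'i \<Rightarrow> real) ` I \<subseteq> {0, 1}"
    by (auto simp: indicator_def)
  then have "bounded ((indicator {i} :: 'i \<Rightarrow> real) ` I)"
    by (rule bounded_subset[rotated]) simp
  then show ?thesis
    using assms by (auto simp: linf_def split: split_indicator)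
qed

lemma sup_norm_indicator_singleton_le: "sup_norm I (indicator {i} :: 'i \<Rightarrow> real) \<le> 1"
  by (rule sup_norm_le) (auto simp: indicator_def)

lemma zero_in_linf: "(\<lambda>_. 0) \<in> linf I"
  by (simp add: linf_def image_constant_conv)

lemma lip_norm_le:
  fixes g :: "'a::metric_space \<Rightarrow> real"
  assumes "0 \<le> K" and "\<And>u v. u \<noteq> v \<Longrightarrow> \<bar>g u - g v\<bar> / dist u v \<le> K"
  shows "lip_norm g \<le> K"
  unfolding lip_norm_def by (rule cSup_least) (use assms in auto)

lemma lip0_diff_quotient_le_lip_norm:
  assumes "lip0 p g" and "u \<noteq> v"
  shows "\<bar>g u - g v\<bar> / dist u v \<le> lip_norm g"
proof -
  obtain K where K: "\<And>s t. \<bar>g s - g t\<bar> \<le> K * dist s t"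
    using assms(1) by (auto simp: lip0_def)
  have le_K: "\<bar>g s - g t\<bar> / dist s t \<le> K" if "s \<noteq> t" for s t
    using K[of s t] that by (simp add: divide_le_eq)
  have "bdd_above (insert 0 {\<bar>g s - g t\<bar> / dist s t | s t. s \<noteq> t})"
    by (rule bdd_aboveI[of _ "max 0 K"]) (auto intro: order_trans[OF le_K])
  then show ?thesis
    unfolding lip_norm_def by (rule cSup_upper[rotated]) (use assms(2) in blast)
qed

lemma abs_interp_op_le_lip_norm:
  assumes "lip0 p g" and "i \<in> I" and "x i \<noteq> y i"
  shows "\<bar>interp_op I x y g i\<bar> \<le> lip_norm g"
  using lip0_diff_quotient_le_lip_norm[OF assms(1,3)] assms(2)
  by (simp add: interp_op_def abs_divide)

lemma lip_interp_const_le: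
  assumes "1 \<le> K"
    and "\<And>\<alpha>. \<alpha> \<in> linf I \<Longrightarrow> sup_norm I \<alpha> \<le> 1 \<Longrightarrow>
           \<exists>g. lip0 p g \<and> lip_norm g \<le> K \<and> interp_op I x y g = \<alpha>"
  shows "lip_interp_const p I x y \<le> K"
  unfolding lip_interp_const_def
  by (rule cInf_lower) (use assms in \<open>auto intro: bdd_belowI[of _ 1]\<close>)

definition linf_lip_op_norm :: "'i set \<Rightarrow> (('i \<Rightarrow> real) \<Rightarrow> 'a::metric_space \<Rightarrow> real) \<Rightarrow> real" where
  "linf_lip_op_norm I T = Sup {lip_norm (T \<alpha>) | \<alpha>. \<alpha> \<in> linf I \<and> sup_norm I \<alpha> \<le> 1}"

lemma lip_norm_le_of_unit_ball:
  assumes "0 \<le> C" and "\<And>\<alpha>. \<alpha> \<in> linf I \<Longrightarrow> lip_norm (T \<alpha>) \<le> C * sup_norm I \<alpha>"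
    and "\<alpha> \<in> linf I" and "sup_norm I \<alpha> \<le> 1"
  shows "lip_norm (T \<alpha>) \<le> C"
  using assms(2)[OF assms(3)] mult_left_le[OF assms(4,1)] by linarith

lemma linf_lip_op_norm_le:
  assumes "0 \<le> C" and "\<And>\<alpha>. \<alpha> \<in> linf I \<Longrightarrow> lip_norm (T \<alpha>) \<le> C * sup_norm I \<alpha>"
  shows "linf_lip_op_norm I T \<le> C"
  unfolding linf_lip_op_norm_def
proof (rule cSup_least)
  have "sup_norm I (\<lambda>_. 0) \<le> 1"
    by (rule sup_norm_le) simp_all
  then show "{lip_norm (T \<alpha>) | \<alpha>. \<alpha> \<in> linf I \<and> sup_norm I \<alpha> \<le> 1} \<noteq> {}"
    using zero_in_linf by blast
next
  fix s assume "s \<in> {lip_norm (T \<alpha>) | \<alpha>. \<alpha> \<in> linf I \<and> sup_norm I \<alpha> \<le> 1}"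
  then obtain \<alpha> where "\<alpha> \<in> linf I" "sup_norm I \<alpha> \<le> 1" "s = lip_norm (T \<alpha>)"
    by blast
  then show "s \<le> C"
    using lip_norm_le_of_unit_ball[OF assms] by simp
qed

lemma lip_norm_le_linf_lip_op_norm:
  assumes "0 \<le> C" and "\<And>\<alpha>. \<alpha> \<in> linf I \<Longrightarrow> lip_norm (T \<alpha>) \<le> C * sup_norm I \<alpha>"
    and "\<alpha> \<in> linf I" and "sup_norm I \<alpha> \<le> 1"
  shows "lip_norm (T \<alpha>) \<le> linf_lip_op_norm I T"
proof -
  have "bdd_above {lip_norm (T \<alpha>) | \<alpha>. \<alpha> \<in> linf I \<and> sup_norm I \<alpha> \<le> 1}"
    using lip_norm_le_of_unit_ball[OF assms(1,2)] by (intro bdd_aboveI[of _ C]) auto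
  moreover have "lip_norm (T \<alpha>) \<in> {lip_norm (T \<alpha>) | \<alpha>. \<alpha> \<in> linf I \<and> sup_norm I \<alpha> \<le> 1}"
    using assms(3,4) by blast
  ultimately show ?thesis
    unfolding linf_lip_op_norm_def by (rule cSup_upper[rotated])
qed

definition beurling_op :: "'i set \<Rightarrow> ('i \<Rightarrow> 'a \<Rightarrow> real) \<Rightarrow> ('i \<Rightarrow> real) \<Rightarrow> 'a \<Rightarrow> real" where
  "beurling_op I f \<alpha> z = (\<Sum>\<^sub>\<infinity>i\<in>I. \<alpha> i * f i z)"

locale beurling_family =
  fixes p :: "'a::metric_space" and I :: "'i set" and x y :: "'i \<Rightarrow> 'a"
    and M :: real and f :: "'i \<Rightarrow> 'a \<Rightarrow> real"
  assumes nonempty: "I \<noteq> {}"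
    and distinct_pairs: "\<And>i. i \<in> I \<Longrightarrow> x i \<noteq> y i"
    and beurling: "beurling_set p I x y M f"
begin

lemma vanish_at_base: "i \<in> I \<Longrightarrow> f i p = 0"
  using beurling by (simp add: beurling_set_def)

lemma diff_quotient_delta:
  "i \<in> I \<Longrightarrow> j \<in> I \<Longrightarrow> (f i (x j) - f i (y j)) / dist (x j) (y j) = (if i = j then 1 else 0)"
  using beurling by (simp add: beurling_set_def)

lemma abs_diff_quotients_summable:
  "u \<noteq> v \<Longrightarrow> (\<lambda>i. \<bar>(f i u - f i v) / dist u v\<bar>) summable_on I"
  using beurling by (simp add: beurling_set_def abs_divide)

lemma sum_abs_diff_quotients_le:
  "u \<noteq> v \<Longrightarrow> (\<Sum>\<^sub>\<infinity>i\<in>I. \<bar>(f i u - f i v) / dist u v\<bar>) \<le> M"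
  using beurling by (simp add: beurling_set_def abs_divide)

lemma nonneg_constant: "0 \<le> M"
proof -
  obtain i where i: "i \<in> I"
    using nonempty by blast
  have "0 \<le> (\<Sum>\<^sub>\<infinity>j\<in>I. \<bar>(f j (x i) - f j (y i)) / dist (x i) (y i)\<bar>)"
    by (rule infsum_nonneg) simp
  also have "\<dots> \<le> M"
    using distinct_pairs[OF i] by (rule sum_abs_diff_quotients_le)
  finally show ?thesis .
qed

lemma summable_weighted_diff_quotients:
  assumes "\<alpha> \<in> linf I" and "u \<noteq> v"
  shows "(\<lambda>i. \<alpha> i * ((f i u - f i v) / dist u v)) summable_on I"
  using abs_diff_quotients_summable[OF assms(2)] abs_le_sup_norm[OF assms(1)]
  by (rule summable_on_bounded_mult)

lemma summable_weighted:
  assumes "\<alpha> \<in> linf I"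
  shows "(\<lambda>i. \<alpha> i * f i z) summable_on I"
proof (cases "z = p")
  case True
  then show ?thesis
    by (subst summable_on_cong[where g = "\<lambda>_. 0"]) (auto simp: vanish_at_base)
next
  case False
  have "(\<lambda>i. dist z p * (\<alpha> i * ((f i z - f i p) / dist z p))) summable_on I"
    by (rule summable_on_cmult_right[OF summable_weighted_diff_quotients[OF assms False]])
  then show ?thesis
    by (rule summable_on_cong[THEN iffD1, rotated]) (use False in \<open>simp add: vanish_at_base\<close>)
qed

lemma beurling_op_diff_quotient:
  assumes "\<alpha> \<in> linf I" and "u \<noteq> v"
  shows "(beurling_op I f \<alpha> u - beurling_op I f \<alpha> v) / dist u v
           = (\<Sum>\<^sub>\<infinity>i\<in>I. \<alpha> i * ((f i u - f i v) / dist u v))"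
proof -
  have "(\<Sum>\<^sub>\<infinity>i\<in>I. \<alpha> i * ((f i u - f i v) / dist u v))
          = (\<Sum>\<^sub>\<infinity>i\<in>I. inverse (dist u v) * (\<alpha> i * f i u - \<alpha> i * f i v))"
    by (simp add: field_simps)
  also have "\<dots> = inverse (dist u v) * (\<Sum>\<^sub>\<infinity>i\<in>I. \<alpha> i * f i u - \<alpha> i * f i v)"
    by (rule infsum_cmult_right')
  also have "\<dots> = (beurling_op I f \<alpha> u - beurling_op I f \<alpha> v) / dist u v"
    using summable_weighted[OF assms(1)]
    by (simp add: infsum_diff beurling_op_def divide_inverse mult.commute)
  finally show ?thesis ..
qed

lemma beurling_op_diff_quotient_le:
  assumes "\<alpha> \<in> linf I" and "u \<noteq> v"
  shows "\<bar>beurling_op I f \<alpha> u - beurling_op I f \<alpha> v\<bar> / dist u v \<le> M * sup_norm I \<alpha>"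
proof -
  have "\<bar>beurling_op I f \<alpha> u - beurling_op I f \<alpha> v\<bar> / dist u v
          = \<bar>(beurling_op I f \<alpha> u - beurling_op I f \<alpha> v) / dist u v\<bar>"
    by (simp add: abs_divide)
  also have "\<dots> = \<bar>\<Sum>\<^sub>\<infinity>i\<in>I. \<alpha> i * ((f i u - f i v) / dist u v)\<bar>"
    by (simp only: beurling_op_diff_quotient[OF assms])
  also have "\<dots> \<le> sup_norm I \<alpha> * (\<Sum>\<^sub>\<infinity>i\<in>I. \<bar>(f i u - f i v) / dist u v\<bar>)"
    using abs_diff_quotients_summable[OF assms(2)] abs_le_sup_norm[OF assms(1)]
    by (rule abs_infsum_bounded_mult_le)
  also have "\<dots> \<le> M * sup_norm I \<alpha>"
    using sum_abs_diff_quotients_le[OF assms(2)] sup_norm_nonneg[OF assms(1)]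
    by (simp add: mult_left_mono mult.commute[of M])
  finally show ?thesis .
qed

lemma lip0_beurling_op:
  assumes "\<alpha> \<in> linf I"
  shows "lip0 p (beurling_op I f \<alpha>)"
proof -
  have "\<bar>beurling_op I f \<alpha> u - beurling_op I f \<alpha> v\<bar> \<le> M * sup_norm I \<alpha> * dist u v" for u v
    using beurling_op_diff_quotient_le[OF assms, of u v]
    by (cases "u = v") (simp_all add: divide_le_eq)
  moreover have "beurling_op I f \<alpha> p = 0"
    unfolding beurling_op_def by (rule infsum_0) (simp add: vanish_at_base)
  ultimately show ?thesis
    unfolding lip0_def by blast
qed

lemma lip_norm_beurling_op_le:
  assumes "\<alpha> \<in> linf I"
  shows "lip_norm (beurling_op I f \<alpha>) \<le> M * sup_norm I \<alpha>"
  by (intro lip_norm_le mult_nonneg_nonneg nonneg_constant sup_norm_nonneg[OF assms]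
      beurling_op_diff_quotient_le[OF assms])

lemma beurling_op_add:
  assumes "\<alpha> \<in> linf I" and "\<beta> \<in> linf I"
  shows "beurling_op I f (\<lambda>i. \<alpha> i + \<beta> i) = (\<lambda>z. beurling_op I f \<alpha> z + beurling_op I f \<beta> z)"
  unfolding beurling_op_def distrib_right
  by (intro ext infsum_add summable_weighted assms)

lemma beurling_op_scale: "beurling_op I f (\<lambda>i. c * \<alpha> i) = (\<lambda>z. c * beurling_op I f \<alpha> z)"
  unfolding beurling_op_def mult.assoc by (intro ext infsum_cmult_right')

lemma interp_op_beurling_op:
  assumes "\<alpha> \<in> linf I"
  shows "interp_op I x y (beurling_op I f \<alpha>) = \<alpha>"
proof
  fix i
  show "interp_op I x y (beurling_op I f \<alpha>) i = \<alpha> i"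
  proof (cases "i \<in> I")
    case False
    then show ?thesis
      using assms by (simp add: interp_op_def linf_def)
  next
    case True
    have "(\<Sum>\<^sub>\<infinity>j\<in>I. \<alpha> j * ((f j (x i) - f j (y i)) / dist (x i) (y i))) = (\<Sum>\<^sub>\<infinity>j\<in>{i}. \<alpha> j)"
      by (rule infsum_cong_neutral) (use True in \<open>auto simp: diff_quotient_delta\<close>)
    then show ?thesis
      using True beurling_op_diff_quotient[OF assms distinct_pairs[OF True]]
      by (simp add: interp_op_def)
  qed
qed

lemma linf_lip_op_norm_beurling_op_le: "linf_lip_op_norm I (beurling_op I f) \<le> M"
  by (rule linf_lip_op_norm_le[where T = "beurling_op I f", OF nonneg_constant lip_norm_beurling_op_le])

lemma lip_interp_const_le_linf_lip_op_norm:
  "lip_interp_const p I x y \<le> linf_lip_op_norm I (beurling_op I f)"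
proof (rule lip_interp_const_le)
  have norm_le: "lip_norm (beurling_op I f \<alpha>) \<le> linf_lip_op_norm I (beurling_op I f)"
    if "\<alpha> \<in> linf I" "sup_norm I \<alpha> \<le> 1" for \<alpha>
    by (rule lip_norm_le_linf_lip_op_norm[where T = "beurling_op I f",
          OF nonneg_constant lip_norm_beurling_op_le that])
  obtain i where i: "i \<in> I"
    using nonempty by blast
  have e: "indicator {i} \<in> linf I"
    using i by (rule indicator_singleton_in_linf)
  have "1 = \<bar>interp_op I x y (beurling_op I f (indicator {i})) i\<bar>"
    by (simp add: interp_op_beurling_op[OF e])
  also have "\<dots> \<le> lip_norm (beurling_op I f (indicator {i}))"
    using lip0_beurling_op[OF e] i distinct_pairs[OF i] by (rule abs_interp_op_le_lip_norm)
  also have "\<dots> \<le> linf_lip_op_norm I (beurling_op I f)"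
    using e sup_norm_indicator_singleton_le by (rule norm_le)
  finally show "1 \<le> linf_lip_op_norm I (beurling_op I f)" .
  show "\<exists>g. lip0 p g \<and> lip_norm g \<le> linf_lip_op_norm I (beurling_op I f) \<and> interp_op I x y g = \<alpha>"
    if "\<alpha> \<in> linf I" "sup_norm I \<alpha> \<le> 1" for \<alpha>
    using lip0_beurling_op[OF that(1)] norm_le[OF that] interp_op_beurling_op[OF that(1)]
    by blast
qed

end

theorem theorem3p9:
  fixes p :: "'a::metric_space" and I :: "'i set"
    and x y :: "'i \<Rightarrow> 'a" and f :: "'i \<Rightarrow> 'a \<Rightarrow> real" and M :: real
    and R :: "('i \<Rightarrow> real) \<Rightarrow> 'a \<Rightarrow> real"
  assumes "I \<noteq> {}"
    and "lip_interpolating p I x y"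
    and "M = lip_interp_const p I x y"
    and "beurling_set p I x y M f"
    and "R = (\<lambda>\<alpha> z. \<Sum>\<^sub>\<infinity>i\<in>I. \<alpha> i * f i z)"
  shows "(\<forall>\<alpha>\<in>linf I. \<forall>z. (\<lambda>i. \<alpha> i * f i z) summable_on I)
    \<and> (\<forall>\<alpha>\<in>linf I. lip0 p (R \<alpha>))
    \<and> (\<forall>\<alpha>\<in>linf I. \<forall>\<beta>\<in>linf I. R (\<lambda>i. \<alpha> i + \<beta> i) = (\<lambda>z. R \<alpha> z + R \<beta> z))
    \<and> (\<forall>\<alpha>\<in>linf I. \<forall>c. R (\<lambda>i. c * \<alpha> i) = (\<lambda>z. c * R \<alpha> z))
    \<and> (\<exists>C. \<forall>\<alpha>\<in>linf I. lip_norm (R \<alpha>) \<le> C * sup_norm I \<alpha>)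
    \<and> Sup {lip_norm (R \<alpha>) | \<alpha>. \<alpha> \<in> linf I \<and> sup_norm I \<alpha> \<le> 1} = M
    \<and> (\<forall>\<alpha>\<in>linf I. interp_op I x y (R \<alpha>) = \<alpha>)"
proof -
  interpret beurling_family p I x y M f
    using assms(1,2,4) by unfold_locales (auto simp: lip_interpolating_def)
  have R: "R = beurling_op I f"
    using assms(5) by (simp add: fun_eq_iff beurling_op_def)
  have norm_eq: "linf_lip_op_norm I (beurling_op I f) = M"
    using linf_lip_op_norm_beurling_op_le lip_interp_const_le_linf_lip_op_norm assms(3)
    by linarith
  show ?thesis
    unfolding R
  proof (intro conjI ballI allI)
    show "Sup {lip_norm (beurling_op I f \<alpha>) | \<alpha>. \<alpha> \<in> linf I \<and> sup_norm I \<alpha> \<le> 1} = M"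
      using norm_eq unfolding linf_lip_op_norm_def .
    show "\<exists>C. \<forall>\<alpha>\<in>linf I. lip_norm (beurling_op I f \<alpha>) \<le> C * sup_norm I \<alpha>"
      using lip_norm_beurling_op_le by blast
  qed (simp_all add: summable_weighted lip0_beurling_op beurling_op_add beurling_op_scale
      interp_op_beurling_op)
qed

end
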